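(* Let $\mathcal{P}$ be a partition of $\{1,\dots,n\}$. A subspace $\mathcal{U}$ of $\mathbb{R}^n$ is not $\mathcal{P}$-realizable if and only if there is a symmetric $\mathcal{P}$-block-diagonal matrix $B$ with $\operatorname{tr}(B)>0$ and $v^TBv\le 0$ for all $v\in\mathcal{U}^\perp$.
   Context: A matrix is $\mathcal{P}$-block-diagonal if it is zero outside the principal submatrices indexed by blocks $\mathcal{I}\in\mathcal{P}$. $\mathcal{E}_{\mathcal{P}}=\{Y\succeq 0: Y_{\mathcal{I}}=I\text{ for all }\mathcal{I}\in\mathcal{P}\}$, with $Y_{\mathcal{I}}$ the principal submatrix indexed by $\mathcal{I}$. $\mathcal{U}$ is $\mathcal{P}$-realizable if some $Y\in\mathcal{E}_{\mathcal{P}}$ has nullspace containing $\mathcal{U}$. *)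

theory Defs
  imports "HOL-Analysis.Analysis" "HOL-Library.Disjoint_Sets"
begin

definition psd :: "real^'n^'n \<Rightarrow> bool" where
  "psd Y \<longleftrightarrow> transpose Y = Y \<and> (\<forall>x. 0 \<le> x \<bullet> (Y *v x))"

definition block_diag :: "'n set set \<Rightarrow> real^'n^'n \<Rightarrow> bool" where
  "block_diag P B \<longleftrightarrow> (\<forall>i j. B $ i $ j \<noteq> 0 \<longrightarrow> (\<exists>I\<in>P. i \<in> I \<and> j \<in> I))"

definition E_P :: "'n set set \<Rightarrow> (real^'n^'n) set" where
  "E_P P = {Y. psd Y \<and> (\<forall>I\<in>P. \<forall>i\<in>I. \<forall>j\<in>I. Y $ i $ j = mat 1 $ i $ j)}"

definition realizable :: "'n set set \<Rightarrow> (real^'n) set \<Rightarrow> bool" where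
  "realizable P U \<longleftrightarrow> (\<exists>Y\<in>E_P P. \<forall>u\<in>U. Y *v u = 0)"

end

theory Submission
  imports Defs
begin

text \<open>Both directions are conic duality for the Frobenius inner product.
  If \<open>Y \<in> E_P P\<close> annihilates \<open>U\<close>, then \<open>Y\<close> is positive semidefinite with range in
  \<open>U\<^sup>\<bottom>\<close>; repeatedly subtracting \<open>c c\<^sup>T / Y\<^sub>k\<^sub>k\<close>, where \<open>c\<close> is the \<open>k\<close>-th column of \<open>Y\<close>,
  writes \<open>Y\<close> as a sum of outer products \<open>c c\<^sup>T\<close> with \<open>c \<in> U\<^sup>\<bottom>\<close>, so \<open>\<langle>B, Y\<rangle> \<le> 0\<close>;
  but \<open>\<langle>B, Y\<rangle> = tr B\<close> for block-diagonal \<open>B\<close>.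
  Conversely, if \<open>U\<close> is not realizable, then \<open>I/n\<close> lies outside the compact convex hull
  of the block-diagonal parts of \<open>v v\<^sup>T\<close>, \<open>v\<close> a unit vector of \<open>U\<^sup>\<bottom>\<close>: otherwise \<open>n\<close> times
  the corresponding convex combination of the \<open>v v\<^sup>T\<close> would realize \<open>U\<close>. A strictly
  separating hyperplane, restricted to the blocks, symmetrised and shifted by a multiple
  of \<open>I\<close>, is the certificate \<open>B\<close>.\<close>

lemma inner_matrix:
  "(X::real^'n::finite^'m::finite) \<bullet> Y = (\<Sum>i\<in>UNIV. \<Sum>j\<in>UNIV. X$i$j * Y$i$j)"
  by (simp add: inner_vec_def)

lemma inner_matrix_vector_mult:
  "(x::real^'n::finite) \<bullet> (M *v y) = (\<Sum>i\<in>UNIV. \<Sum>j\<in>UNIV. M$i$j * x$i * y$j)"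
  by (simp add: inner_vec_def matrix_vector_mult_def sum_distrib_left mult_ac)

lemma inner_mat1: "(M::real^'n::finite^'n) \<bullet> mat 1 = trace M"
  unfolding inner_matrix trace_def mat_def
  by (simp add: if_distrib[where f="\<lambda>x. _ * x"] cong: if_cong)

lemma inner_transpose: "transpose (M::real^'n::finite^'n) \<bullet> X = M \<bullet> transpose X"
  unfolding inner_matrix transpose_def by (simp add: sum.swap[of "\<lambda>i j. M$j$i * X$i$j"])

lemma inner_axis_matrix_vector_mult_axis:
  "axis i 1 \<bullet> ((Y::real^'n::finite^'n) *v axis j 1) = Y$i$j"
  by (simp add: matrix_vector_mult_basis column_def inner_axis')

lemma symmetric_inner_matrix_vector_mult_commute:
  "transpose Y = Y \<Longrightarrow> (x::real^'n::finite) \<bullet> (Y *v y) = y \<bullet> (Y *v x)"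
  by (metis dot_lmul_matrix inner_commute vector_transpose_matrix)

definition outer :: "real^'n \<Rightarrow> real^'m \<Rightarrow> real^'m^'n" where
  "outer u w = (\<chi> i j. u$i * w$j)"

lemma outer_mult_vec: "outer u w *v x = (w \<bullet> x) *\<^sub>R u"
  by (simp add: outer_def vec_eq_iff matrix_vector_mult_def inner_vec_def sum_distrib_left mult_ac)

lemma inner_outer_self: "(B::real^'n::finite^'n) \<bullet> outer u u = u \<bullet> (B *v u)"
  by (simp add: inner_matrix_vector_mult inner_matrix outer_def mult_ac)

lemma transpose_outer_self: "transpose (outer u u) = outer u u"
  by (simp add: outer_def transpose_def vec_eq_iff mult.commute)

lemma trace_outer_self: "trace (outer u u) = u \<bullet> u"
  by (simp add: trace_def outer_def inner_vec_def)

lemma psd_outer_self: "psd (outer u u)"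
  by (simp add: psd_def transpose_outer_self outer_mult_vec inner_commute[of _ u])

lemma psd_cauchy_schwarz:
  assumes "psd (Y::real^'n::finite^'n)"
  shows "(x \<bullet> (Y *v y))^2 \<le> (x \<bullet> (Y *v x)) * (y \<bullet> (Y *v y))"
proof -
  define a b d where "a = x \<bullet> (Y *v x)" and "b = x \<bullet> (Y *v y)" and "d = y \<bullet> (Y *v y)"
  have "y \<bullet> (Y *v x) = b"
    using assms symmetric_inner_matrix_vector_mult_commute unfolding psd_def b_def by metis
  then have quadratic_nonneg: "0 \<le> a + 2*t*b + t^2*d" for t
    using assms[unfolded psd_def, THEN conjunct2, rule_format, of "x + t *\<^sub>R y"]
    by (simp add: a_def b_def d_def algebra_simps power2_eq_square)
  have "0 \<le> d" using assms psd_def d_def by blast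
  show ?thesis
  proof (cases "d = 0")
    case True
    have "b = 0"
    proof (rule ccontr)
      assume "b \<noteq> 0"
      then show False
        using quadratic_nonneg[of "-(a+1)/(2*b)"] True by (simp add: field_simps)
    qed
    then show ?thesis using True a_def b_def d_def by simp
  next
    case False
    with \<open>0 \<le> d\<close> have "0 < d" by simp
    then have "b^2 \<le> a * d"
      using quadratic_nonneg[of "-b/d"] by (simp add: power2_eq_square field_simps)
    then show ?thesis using a_def b_def d_def by (simp add: mult.commute)
  qed
qed

lemma psd_entry_square_le:
  "psd (Y::real^'n::finite^'n) \<Longrightarrow> (Y$i$j)^2 \<le> Y$i$i * Y$j$j"
  using psd_cauchy_schwarz[of Y "axis i 1" "axis j 1"]
  by (simp add: inner_axis_matrix_vector_mult_axis)

lemma psd_diag_nonneg: "psd (Y::real^'n::finite^'n) \<Longrightarrow> 0 \<le> Y$k$k"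
  using inner_axis_matrix_vector_mult_axis[of k Y k] unfolding psd_def by metis

lemma psd_entry_eq_0_if_diag_eq_0:
  "psd (Y::real^'n::finite^'n) \<Longrightarrow> Y$i$i = 0 \<Longrightarrow> Y$i$j = 0"
  using psd_entry_square_le[of Y i j] by simp

lemma psd_eq_0_if_diag_eq_0:
  "psd (Y::real^'n::finite^'n) \<Longrightarrow> (\<And>k. Y$k$k = 0) \<Longrightarrow> Y = 0"
  by (simp add: vec_eq_iff psd_entry_eq_0_if_diag_eq_0)

definition schur_reduce :: "'n \<Rightarrow> real^'n^'n \<Rightarrow> real^'n^'n" where
  "schur_reduce k Y = Y - (1 / Y$k$k) *\<^sub>R outer (column k Y) (column k Y)"

lemma column_inner_symmetric:
  "transpose Y = Y \<Longrightarrow> column k (Y::real^'n::finite^'n) \<bullet> x = (Y *v x)$k"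
  by (metis cart_eq_inner_axis matrix_vector_mult_basis
      symmetric_inner_matrix_vector_mult_commute inner_commute)

lemma schur_reduce_mult_vec:
  assumes "transpose Y = Y"
  shows "schur_reduce k Y *v x = Y *v x - ((Y *v x)$k / Y$k$k) *\<^sub>R column k Y"
  using column_inner_symmetric[OF assms]
  by (simp add: schur_reduce_def matrix_vector_mult_diff_rdistrib outer_mult_vec
      scaleR_matrix_vector_assoc[symmetric])

lemma schur_reduce_diag: "schur_reduce k Y $j$j = Y$j$j - (Y$j$k)^2 / Y$k$k"
  by (simp add: schur_reduce_def outer_def column_def power2_eq_square)

lemma psd_schur_reduce:
  assumes "psd (Y::real^'n::finite^'n)" and "0 < Y$k$k"
  shows "psd (schur_reduce k Y)"
  unfolding psd_def
proof
  have "Y$j$i = Y$i$j" for i j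
    using assms(1) unfolding psd_def transpose_def vec_eq_iff by simp
  then show "transpose (schur_reduce k Y) = schur_reduce k Y"
    by (simp add: schur_reduce_def transpose_def vec_eq_iff outer_def column_def mult.commute)
next
  show "\<forall>x. 0 \<le> x \<bullet> (schur_reduce k Y *v x)"
  proof
    fix x
    have symmetric: "transpose Y = Y" using assms(1) psd_def by blast
    have "((Y *v x)$k)^2 \<le> (x \<bullet> (Y *v x)) * Y$k$k"
      using psd_cauchy_schwarz[OF assms(1), of "axis k 1" x]
      by (simp add: inner_axis_matrix_vector_mult_axis inner_axis' matrix_vector_mult_basis
          column_def mult.commute)
    then have "0 \<le> x \<bullet> (Y *v x) - ((Y *v x)$k)^2 / Y$k$k"
      using assms(2) by (simp add: field_simps)
    also have "\<dots> = x \<bullet> (schur_reduce k Y *v x)"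
      by (simp add: schur_reduce_mult_vec[OF symmetric] inner_diff_right power2_eq_square
          column_inner_symmetric[OF symmetric, symmetric] inner_commute[of x])
    finally show "0 \<le> x \<bullet> (schur_reduce k Y *v x)" .
  qed
qed

lemma diag_support_schur_reduce:
  assumes "psd (Y::real^'n::finite^'n)" and "0 < Y$k$k"
  shows "{j. schur_reduce k Y $j$j \<noteq> 0} \<subset> {j. Y$j$j \<noteq> 0}"
proof
  show "{j. schur_reduce k Y $j$j \<noteq> 0} \<subseteq> {j. Y$j$j \<noteq> 0}"
    using psd_entry_eq_0_if_diag_eq_0[OF assms(1)] by (auto simp: schur_reduce_diag)
  have "schur_reduce k Y $k$k = 0"
    using assms(2) by (simp add: schur_reduce_diag power2_eq_square)
  then show "{j. schur_reduce k Y $j$j \<noteq> 0} \<noteq> {j. Y$j$j \<noteq> 0}"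
    using assms(2) by force
qed

lemma inner_schur_reduce:
  "(B::real^'n::finite^'n) \<bullet> Y
    = B \<bullet> schur_reduce k Y + (column k Y \<bullet> (B *v column k Y)) / Y$k$k"
  by (simp add: schur_reduce_def inner_diff_right inner_outer_self)

lemma inner_nonpos_if_kernel_contains:
  fixes B :: "real^'n::finite^'n"
  assumes nonpos: "\<forall>v\<in>orthogonal_comp U. v \<bullet> (B *v v) \<le> 0"
  shows "psd Y \<Longrightarrow> \<forall>u\<in>U. Y *v u = 0 \<Longrightarrow> B \<bullet> Y \<le> 0"
proof (induction "card {k. Y$k$k \<noteq> 0}" arbitrary: Y rule: less_induct)
  case less
  show ?case
  proof (cases "\<exists>k. Y$k$k \<noteq> 0")
    case False
    then show ?thesis using psd_eq_0_if_diag_eq_0[OF less.prems(1)] by simp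
  next
    case True
    then obtain k where "Y$k$k \<noteq> 0" by blast
    with psd_diag_nonneg[OF less.prems(1)] have pivot: "0 < Y$k$k"
      by (simp add: order_less_le)
    have symmetric: "transpose Y = Y" using less.prems(1) psd_def by blast
    have column_perp: "column k Y \<in> orthogonal_comp U"
      using less.prems(2) column_inner_symmetric[OF symmetric]
      by (simp add: orthogonal_comp_def orthogonal_def inner_commute)
    have "B \<bullet> schur_reduce k Y \<le> 0"
    proof (rule less.hyps)
      show "card {j. schur_reduce k Y $j$j \<noteq> 0} < card {j. Y$j$j \<noteq> 0}"
        by (rule psubset_card_mono[OF _ diag_support_schur_reduce[OF less.prems(1) pivot]]) simp
      show "psd (schur_reduce k Y)" by (rule psd_schur_reduce[OF less.prems(1) pivot])
      show "\<forall>u\<in>U. schur_reduce k Y *v u = 0"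
        using less.prems(2) by (simp add: schur_reduce_mult_vec[OF symmetric])
    qed
    moreover have "column k Y \<bullet> (B *v column k Y) / Y$k$k \<le> 0"
      using nonpos column_perp pivot by (simp add: divide_nonpos_pos)
    ultimately show ?thesis by (simp add: inner_schur_reduce[of B Y k])
  qed
qed

lemma inner_E_P_eq_trace:
  fixes B Y :: "real^'n::finite^'n"
  assumes "block_diag P B" and "Y \<in> E_P P"
  shows "B \<bullet> Y = trace B"
proof -
  have entry: "B$i$j * Y$i$j = B$i$j * mat 1 $ i $ j" for i j
    using assms unfolding block_diag_def E_P_def by fastforce
  show ?thesis unfolding inner_mat1[symmetric] inner_matrix by (simp only: entry)
qed

lemma not_realizable_if_certificate:
  fixes B :: "real^'n::finite^'n"
  assumes "block_diag P B" and "trace B > 0"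
    and "\<forall>v\<in>orthogonal_comp U. v \<bullet> (B *v v) \<le> 0"
  shows "\<not> realizable P U"
proof
  assume "realizable P U"
  then obtain Y where Y: "Y \<in> E_P P" "\<forall>u\<in>U. Y *v u = 0"
    unfolding realizable_def by blast
  then have "B \<bullet> Y \<le> 0"
    using inner_nonpos_if_kernel_contains[OF assms(3)] E_P_def by blast
  then show False using inner_E_P_eq_trace[OF assms(1) Y(1)] assms(2) by simp
qed

definition same_block :: "'n set set \<Rightarrow> 'n \<Rightarrow> 'n \<Rightarrow> bool" where
  "same_block P i j \<longleftrightarrow> (\<exists>I\<in>P. i \<in> I \<and> j \<in> I)"

definition block_part :: "'n set set \<Rightarrow> real^'n^'n \<Rightarrow> real^'n^'n" where
  "block_part P X = (\<chi> i j. if same_block P i j then X$i$j else 0)"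

lemma same_block_refl: "partition_on UNIV P \<Longrightarrow> same_block P i i"
  unfolding partition_on_def same_block_def by blast

lemma same_block_commute: "same_block P i j \<longleftrightarrow> same_block P j i"
  unfolding same_block_def by blast

lemma linear_block_part: "linear (block_part P)"
  by (rule linearI) (auto simp: block_part_def vec_eq_iff)

lemma inner_block_part: "block_part P X \<bullet> Y = X \<bullet> block_part P Y"
  unfolding inner_matrix block_part_def by (auto intro!: sum.cong)

lemma convex_psd_annihilating:
  "convex {Y. psd (Y::real^'n::finite^'n) \<and> (\<forall>u\<in>U. Y *v u = 0)}"
  unfolding convex_def
proof (intro ballI allI impI, simp only: mem_Collect_eq, intro conjI)
  fix X Y :: "real^'n^'n" and a b :: real
  assume X: "psd X \<and> (\<forall>u\<in>U. X *v u = 0)" and Y: "psd Y \<and> (\<forall>u\<in>U. Y *v u = 0)"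
    and ab: "0 \<le> a" "0 \<le> b" "a + b = 1"
  show "psd (a *\<^sub>R X + b *\<^sub>R Y)"
    unfolding psd_def
  proof
    show "transpose (a *\<^sub>R X + b *\<^sub>R Y) = a *\<^sub>R X + b *\<^sub>R Y"
      using X Y unfolding psd_def by (simp add: transpose_def vec_eq_iff)
    show "\<forall>v. 0 \<le> v \<bullet> ((a *\<^sub>R X + b *\<^sub>R Y) *v v)"
      using X Y ab unfolding psd_def
      by (simp add: matrix_vector_mult_add_rdistrib scaleR_matrix_vector_assoc[symmetric]
          inner_add_right)
  qed
  show "\<forall>u\<in>U. (a *\<^sub>R X + b *\<^sub>R Y) *v u = 0"
    using X Y by (simp add: matrix_vector_mult_add_rdistrib scaleR_matrix_vector_assoc[symmetric])
qed

definition block_moments :: "'n set set \<Rightarrow> (real^'n) set \<Rightarrow> (real^'n^'n) set" where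
  "block_moments P U =
     convex hull ((\<lambda>v. block_part P (outer v v)) ` (orthogonal_comp U \<inter> sphere 0 1))"

lemma compact_block_moments: "compact (block_moments P (U::(real^'n::finite) set))"
proof -
  have "continuous_on UNIV (\<lambda>v::real^'n. block_part P (outer v v))"
    unfolding block_part_def outer_def
    by (intro continuous_on_vec_lambda, case_tac "same_block P i j")
      (auto intro!: continuous_intros)
  then show ?thesis
    unfolding block_moments_def
    by (intro compact_convex_hull compact_continuous_image closed_Int_compact
        closed_subspace subspace_orthogonal_comp compact_sphere)
      (auto elim: continuous_on_subset)
qed

lemma scaled_identity_notin_block_moments:
  fixes U :: "(real^'n::finite) set"
  assumes "\<not> realizable P U"
  shows "inverse (real CARD('n)) *\<^sub>R mat 1 \<notin> block_moments P U"
proof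
  define n where "n = real CARD('n)"
  have "block_moments P U
      = block_part P ` (convex hull ((\<lambda>v. outer v v) ` (orthogonal_comp U \<inter> sphere 0 1)))"
    unfolding block_moments_def by (simp add: convex_hull_linear_image[OF linear_block_part] image_image)
  moreover assume "inverse n *\<^sub>R mat 1 \<in> block_moments P U"
  ultimately obtain Y where Y: "Y \<in> convex hull ((\<lambda>v. outer v v) ` (orthogonal_comp U \<inter> sphere 0 1))"
    and block_Y: "inverse n *\<^sub>R mat 1 = block_part P Y"
    by blast
  have "outer v v *v u = 0" if "v \<in> orthogonal_comp U" "u \<in> U" for u v
    using that by (simp add: outer_mult_vec orthogonal_comp_def orthogonal_def inner_commute)
  then have "(\<lambda>v. outer v v) ` (orthogonal_comp U \<inter> sphere 0 1)
      \<subseteq> {Y. psd Y \<and> (\<forall>u\<in>U. Y *v u = 0)}"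
    using psd_outer_self by blast
  then have "psd Y \<and> (\<forall>u\<in>U. Y *v u = 0)"
    using hull_minimal[where S=convex, OF _ convex_psd_annihilating] Y by blast
  moreover have "\<forall>I\<in>P. \<forall>i\<in>I. \<forall>j\<in>I. (n *\<^sub>R Y) $ i $ j = mat 1 $ i $ j"
  proof (intro ballI)
    fix I i j assume "I \<in> P" "i \<in> I" "j \<in> I"
    then have "same_block P i j" unfolding same_block_def by blast
    then have "inverse n * mat 1 $ i $ j = Y $ i $ j"
      using arg_cong[OF block_Y, of "\<lambda>M. M $ i $ j"] by (simp add: block_part_def)
    then show "(n *\<^sub>R Y) $ i $ j = mat 1 $ i $ j" by (simp add: n_def field_simps)
  qed
  ultimately have "n *\<^sub>R Y \<in> E_P P \<and> (\<forall>u\<in>U. (n *\<^sub>R Y) *v u = 0)"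
    unfolding E_P_def psd_def
    by (simp add: n_def transpose_scalar scaleR_matrix_vector_assoc[symmetric])
  then show False using assms unfolding realizable_def by blast
qed

lemma quadratic_form_nonpos_if_neg_on_sphere:
  assumes "subspace S" and "\<forall>u\<in>S \<inter> sphere 0 1. u \<bullet> (B *v u) < 0" and "v \<in> S"
  shows "v \<bullet> ((B::real^'n::finite^'n) *v v) \<le> 0"
proof (cases "v = 0")
  case False
  define u where "u = (1 / norm v) *\<^sub>R v"
  have "u \<in> S \<inter> sphere 0 1" using assms(1,3) False by (simp add: u_def subspace_scale)
  moreover have "v \<bullet> (B *v v) = (norm v)^2 * (u \<bullet> (B *v u))"
    using False by (simp add: u_def matrix_vector_mult_scaleR power2_eq_square)
  ultimately show ?thesis
    using assms(2) by (simp add: mult_nonneg_nonpos less_imp_le)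
qed simp

lemma certificate_if_not_realizable:
  fixes P :: "'n::finite set set" and U :: "(real^'n) set"
  assumes partition: "partition_on UNIV P" and "\<not> realizable P U"
  shows "\<exists>B::real^'n^'n. transpose B = B \<and> block_diag P B \<and> trace B > 0 \<and>
        (\<forall>v\<in>orthogonal_comp U. v \<bullet> (B *v v) \<le> 0)"
proof -
  define n where "n = real CARD('n)"
  have "convex (block_moments P U)" by (simp add: block_moments_def convex_convex_hull)
  from separating_hyperplane_closed_point[OF this
      compact_imp_closed[OF compact_block_moments] scaled_identity_notin_block_moments[OF assms(2)]]
  obtain a b where "a \<bullet> (inverse n *\<^sub>R mat 1) < b" and above: "\<forall>X\<in>block_moments P U. b < a \<bullet> X"
    unfolding n_def by blast
  then have trace_a: "trace a < b * n"
    by (simp add: n_def inner_mat1 field_simps)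
  define S where "S = block_part P a"
  define B where "B = b *\<^sub>R mat 1 - (1/2) *\<^sub>R (S + transpose S)"
  have B_entry: "B$i$j = b * mat 1 $i$j - (S$i$j + S$j$i) / 2" for i j
    by (simp add: B_def transpose_def)
  have "transpose B = B" by (simp add: vec_eq_iff transpose_def B_entry mat_def)
  moreover have "same_block P i j" if "B$i$j \<noteq> 0" for i j
    using that same_block_refl[OF partition, of i] same_block_commute[of P i j]
    by (auto simp: B_entry S_def block_part_def mat_def split: if_splits)
  then have "block_diag P B" by (simp add: block_diag_def same_block_def)
  moreover have "trace B = b * n - trace a"
    by (simp add: trace_def B_entry sum_subtractf n_def S_def block_part_def
        same_block_refl[OF partition] mat_def)
  with trace_a have "trace B > 0" by simp
  moreover have "\<forall>u\<in>orthogonal_comp U \<inter> sphere 0 1. u \<bullet> (B *v u) < 0"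
  proof
    fix u assume u: "u \<in> orthogonal_comp U \<inter> sphere 0 1"
    then have "b < S \<bullet> outer u u"
      using above by (auto simp: S_def inner_block_part block_moments_def intro!: hull_inc)
    moreover have "u \<bullet> (B *v u) = b - S \<bullet> outer u u"
      using u by (simp add: inner_outer_self[symmetric] B_def inner_diff_left inner_add_left
          inner_transpose transpose_outer_self inner_commute[of "mat 1"] inner_mat1
          trace_outer_self dot_square_norm)
    ultimately show "u \<bullet> (B *v u) < 0" by simp
  qed
  then have "\<forall>v\<in>orthogonal_comp U. v \<bullet> (B *v v) \<le> 0"
    using quadratic_form_nonpos_if_neg_on_sphere[OF subspace_orthogonal_comp] by blast
  ultimately show ?thesis by blast
qed

theorem lemma5p5:
  fixes P :: "'n::finite set set" and U :: "(real^'n) set"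
  assumes "partition_on UNIV P" and "subspace U"
  shows "\<not> realizable P U \<longleftrightarrow>
    (\<exists>B::real^'n^'n. transpose B = B \<and> block_diag P B \<and> trace B > 0 \<and>
        (\<forall>v\<in>orthogonal_comp U. v \<bullet> (B *v v) \<le> 0))"
  using certificate_if_not_realizable[OF assms(1)] not_realizable_if_certificate by blast

end
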